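(* Let $\mathcal{H}_r$ be a Hirzebruch surface, $\beta=aD_1+bD_2$ with $a>rb$ and $b>0$ (an ample class), $f\in S_\beta$ nondegenerate, and $Z=\{f=0\}$. Then the linear system $J_1(f)_\beta\subset S_\beta=H^0(\mathcal{H}_r,\mathcal{O}(aD_1+bD_2))$ restricted to $Z$ is base point free, and the morphism it induces on $Z$ is birational onto its image.
   Context: $\mathcal{H}_r$ ($r\ge0$) is the smooth complete toric surface with ray generators $u_1=(-1,r)$, $u_2=(0,1)$, $u_3=(1,0)$, $u_4=(0,-1)$ and torus-invariant divisors $D_1,\dots,D_4$. Its Cox ring is $S=\mathbb{C}[x_1,x_2,x_3,x_4]$ graded by $\operatorname{Pic}=\mathbb{Z}D_1\oplus\mathbb{Z}D_2$ with $\deg x_1=\deg x_3=D_1$, $\deg x_2=D_2$, $\deg x_4=rD_1+D_2$; $\mathcal{H}_r$ is the quotient of $\mathbb{C}^4\setminus V(x_3x_4,x_1x_4,x_1x_2,x_2x_3)$ by $(\lambda,\mu)\cdot(x_1,x_2,x_3,x_4)=(\lambda x_1,\mu x_2,\lambda x_3,\lambda^r\mu x_4)$. $f\in S_\beta$ ($\beta$ ample) is nondegenerate if $x_i\partial f/\partial x_i$ ($i=1,\dots,4$) have no common zero on $\mathcal{H}_r$. $J_0(f)=\langle x_i\partial f/\partial x_i\rangle$, $J_1(f)=J_0(f):\langle x_1x_2x_3x_4\rangle$, $J_1(f)_\beta=J_1(f)\cap S_\beta$. *)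

theory Defs
  imports Complex_Main "HOL-Library.Poly_Mapping"
begin

text \<open>A monomial is an exponent vector (nat =>0 nat), a polynomial a finitely
  supported map from monomials to coefficients; multiplication is the
  library's convolution (comm_ring_1 instance).\<close>

type_synonym mpoly = "(nat \<Rightarrow>\<^sub>0 nat) \<Rightarrow>\<^sub>0 complex"

definition var :: "nat \<Rightarrow> mpoly" where
  "var i = Poly_Mapping.single (Poly_Mapping.single i 1) 1"

text \<open>Cox ring S = C[x_1,x_2,x_3,x_4]: only variables 1..4 occur.\<close>
definition in_S :: "mpoly \<Rightarrow> bool" where
  "in_S p \<longleftrightarrow> (\<forall>m \<in> Poly_Mapping.keys p. Poly_Mapping.keys m \<subseteq> {1,2,3,4})"

text \<open>Pic-degree of a monomial, in the basis D_1, D_2: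
  deg x_1 = deg x_3 = D_1, deg x_2 = D_2, deg x_4 = r D_1 + D_2.\<close>
definition mon_deg :: "nat \<Rightarrow> (nat \<Rightarrow>\<^sub>0 nat) \<Rightarrow> nat \<times> nat" where
  "mon_deg r m = (Poly_Mapping.lookup m 1 + Poly_Mapping.lookup m 3 + r * Poly_Mapping.lookup m 4, Poly_Mapping.lookup m 2 + Poly_Mapping.lookup m 4)"

definition in_S_deg :: "nat \<Rightarrow> nat \<Rightarrow> nat \<Rightarrow> mpoly \<Rightarrow> bool" where
  "in_S_deg r a b p \<longleftrightarrow> in_S p \<and> (\<forall>m \<in> Poly_Mapping.keys p. mon_deg r m = (a, b))"

definition eval :: "mpoly \<Rightarrow> (nat \<Rightarrow> complex) \<Rightarrow> complex" where
  "eval p x = (\<Sum>m \<in> Poly_Mapping.keys p. Poly_Mapping.lookup p m * (\<Prod>j \<in> Poly_Mapping.keys m. x j ^ Poly_Mapping.lookup m j))"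

definition pderiv :: "nat \<Rightarrow> mpoly \<Rightarrow> mpoly" where
  "pderiv i p = Abs_poly_mapping
     (\<lambda>m. of_nat (Poly_Mapping.lookup m i + 1) * Poly_Mapping.lookup p (m + Poly_Mapping.single i 1))"

definition logder :: "nat \<Rightarrow> mpoly \<Rightarrow> mpoly" where
  "logder i f = var i * pderiv i f"

definition in_U :: "(nat \<Rightarrow> complex) \<Rightarrow> bool" where
  "in_U x \<longleftrightarrow> x 3 * x 4 \<noteq> 0 \<or> x 1 * x 4 \<noteq> 0 \<or> x 1 * x 2 \<noteq> 0 \<or> x 2 * x 3 \<noteq> 0"

text \<open>Two points of U define the same point of H_r iff they lie in the same
  orbit of (lambda, mu).(x1,x2,x3,x4) = (lambda x1, mu x2, lambda x3, lambda^r mu x4).\<close>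
definition hr_equiv :: "nat \<Rightarrow> (nat \<Rightarrow> complex) \<Rightarrow> (nat \<Rightarrow> complex) \<Rightarrow> bool" where
  "hr_equiv r x y \<longleftrightarrow> (\<exists>l u. l \<noteq> 0 \<and> u \<noteq> 0 \<and>
      y 1 = l * x 1 \<and> y 2 = u * x 2 \<and> y 3 = l * x 3 \<and> y 4 = l ^ r * u * x 4)"

definition nondegenerate :: "mpoly \<Rightarrow> bool" where
  "nondegenerate f \<longleftrightarrow> \<not> (\<exists>x. in_U x \<and> (\<forall>i \<in> {1,2,3,4}. eval (logder i f) x = 0))"

definition in_Z :: "mpoly \<Rightarrow> (nat \<Rightarrow> complex) \<Rightarrow> bool" where
  "in_Z f x \<longleftrightarrow> in_U x \<and> eval f x = 0"

definition J0 :: "mpoly \<Rightarrow> mpoly set" where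
  "J0 f = {g. \<exists>h. (\<forall>i. in_S (h i)) \<and> g = (\<Sum>i \<in> {1,2,3,4}. h i * logder i f)}"

text \<open>J_1(f) = J_0(f) : <x_1 x_2 x_3 x_4>; since J_0(f) is an ideal,
  g is in the quotient iff x_1 x_2 x_3 x_4 g is in J_0(f).\<close>
definition J1 :: "mpoly \<Rightarrow> mpoly set" where
  "J1 f = {g. in_S g \<and> (var 1 * var 2 * var 3 * var 4) * g \<in> J0 f}"

definition J1_deg :: "nat \<Rightarrow> nat \<Rightarrow> nat \<Rightarrow> mpoly \<Rightarrow> mpoly set" where
  "J1_deg r a b f = {g \<in> J1 f. in_S_deg r a b g}"

end

theory Submission
  imports Defs "Subresultants.Subresultant_Gcd" "HOL-Computational_Algebra.Field_as_Ring"
    "HOL-Computational_Algebra.Fundamental_Theorem_Algebra"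
begin

text \<open>Every x_i df/dx_i lies in J_1(f)_beta, so base point freeness is nondegeneracy.
  J_1(f)_beta also contains x_j df/dx_i for i, j in {1,3}, x_4 df/dx_4 and x_2 x_j^r df/dx_4.
  At points where df/dx_4 and one of df/dx_1, df/dx_3 do not vanish, proportional values of these
  sections first force [x_1 : x_3] and then x_2, x_4 to agree up to the torus action.
  The other points of Z are finitely many orbits. Off the chart x_2 x_3 /= 0, Z meets the curves
  x_2 = 0 and x_3 = 0 in finitely many points. In the chart, Z is the affine curve f(s,1,1,t) = 0;
  nondegeneracy and the Euler relations make it smooth and keep it from containing a line
  s = const, and then a resultant argument leaves only finitely many zeros of df/dt on it.
  On Z the locus df/dx_1 = df/dx_3 = 0 is empty for r > 0 by the Euler relation for D_1, and for
  r = 0 the same argument applies with s and t exchanged.\<close>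

section \<open>Bivariate polynomials\<close>

(* F is a polynomial in t over C[s]: pderiv F is the t-derivative, map_poly pderiv F the s-derivative. *)
definition poly2 :: "'a::comm_ring_1 poly poly \<Rightarrow> 'a \<Rightarrow> 'a \<Rightarrow> 'a" where
  "poly2 F s t = poly (map_poly (\<lambda>c. poly c s) F) t"

lemma poly2_0 [simp]: "poly2 0 s t = 0"
  by (simp add: poly2_def)

lemma poly2_add: "poly2 (F + G) s t = poly2 F s t + poly2 G s t"
proof -
  interpret map_poly_comm_ring_hom "\<lambda>c. poly c s" ..
  show ?thesis by (simp add: poly2_def hom_add)
qed

lemma poly2_mult: "poly2 (F * G) s t = poly2 F s t * poly2 G s t"
proof -
  interpret map_poly_comm_ring_hom "\<lambda>c. poly c s" ..
  show ?thesis by (simp add: poly2_def hom_mult)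
qed

lemma poly2_sum: "poly2 (sum G I) s t = (\<Sum>i\<in>I. poly2 (G i) s t)"
  by (induction I rule: infinite_finite_induct) (auto simp: poly2_add)

lemma poly2_monom: "poly2 (monom c k) s t = poly c s * t ^ k"
  by (simp add: poly2_def map_poly_monom poly_monom)

lemma poly2_const [simp]: "poly2 [:c:] s t = poly c s"
  using poly2_monom[of c 0] by (simp add: monom_0)

lemma poly2_altdef_le:
  assumes "degree F \<le> n"
  shows "poly2 F s t = (\<Sum>k\<le>n. poly (coeff F k) s * t ^ k)"
proof -
  have "poly2 F s t = poly2 (\<Sum>k\<le>n. monom (coeff F k) k) s t"
    by (simp add: poly_as_sum_of_monoms' assms)
  then show ?thesis
    by (simp add: poly2_sum poly2_monom)
qed

lemma has_field_derivative_poly2_right: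
  "((\<lambda>t. poly2 F s t) has_field_derivative poly2 (pderiv F) s t) (at t)"
  unfolding poly2_def poly_hom.map_poly_pderiv by (rule poly_DERIV)

lemma has_field_derivative_poly2_left:
  fixes F :: "'a::{real_normed_field} poly poly"
  shows "((\<lambda>s. poly2 F s t) has_field_derivative poly2 (map_poly pderiv F) s t) (at s)"
proof -
  have "poly2 (map_poly pderiv F) s t = (\<Sum>k\<le>degree F. poly (pderiv (coeff F k)) s * t ^ k)"
    by (subst poly2_altdef_le[OF degree_map_poly_le]) (simp add: coeff_map_poly)
  moreover have "(\<lambda>s. poly2 F s t) = (\<lambda>s. \<Sum>k\<le>degree F. poly (coeff F k) s * t ^ k)"
    by (simp add: poly2_altdef_le[OF order_refl])
  ultimately show ?thesis
    by (simp only:) (intro DERIV_sum DERIV_cmult_right poly_DERIV)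
qed

lemma poly2_has_zero:
  fixes H :: "complex poly poly"
  assumes "degree H \<noteq> 0"
  obtains s t where "poly2 H s t = 0"
proof -
  have "lead_coeff H \<noteq> 0"
    using assms by auto
  then obtain s where s: "poly (lead_coeff H) s \<noteq> 0"
    using poly_all_0_iff_0 by blast
  define Hs where "Hs = map_poly (\<lambda>c. poly c s) H"
  have "coeff Hs (degree H) \<noteq> 0"
    using s by (simp add: Hs_def coeff_map_poly)
  then have "degree Hs \<noteq> 0"
    using assms le_degree by fastforce
  then obtain t where "poly Hs t = 0"
    using fundamental_theorem_of_algebra constant_degree by metis
  then show thesis
    by (intro that[of s t]) (simp add: poly2_def Hs_def)
qed

lemma prime_factor_of_positive_degree:
  fixes G :: "'a::{factorial_ring_gcd,semiring_gcd_mult_normalize} poly"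
  assumes "G \<noteq> 0" "degree G \<noteq> 0"
  obtains H where "prime H" "H dvd G" "degree H \<noteq> 0"
  using assms
proof (induction G arbitrary: thesis rule: prime_divisors_induct)
  case (unit x)
  then show ?case
    by (auto simp: is_unit_poly_iff)
next
  case (factor p x)
  show ?case
  proof (cases "degree p = 0")
    case True
    with factor.prems have "degree x \<noteq> 0" "x \<noteq> 0"
      by (auto simp: degree_mult_eq)
    then show ?thesis
      using factor.IH factor.prems(1) dvd_mult by metis
  qed (use factor in auto)
qed simp

lemma square_factor_if_resultant_pderiv_eq_0:
  fixes F :: "complex poly poly"
  assumes "F \<noteq> 0" "resultant F (pderiv F) = 0"
  obtains H where "degree H \<noteq> 0" "H * H dvd F"
proof -
  have "degree (gcd F (pderiv F)) \<noteq> 0" "gcd F (pderiv F) \<noteq> 0"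
    using assms resultant_0_gcd by auto
  then obtain H where H: "prime H" "H dvd gcd F (pderiv F)" "degree H \<noteq> 0"
    using prime_factor_of_positive_degree by blast
  then have "H dvd F" "H dvd pderiv F"
    using dvd_trans by auto
  then obtain K where K: "F = H * K"
    by (elim dvdE)
  have "H dvd K * pderiv H"
    using \<open>H dvd pderiv F\<close> unfolding K pderiv_mult by (simp add: dvd_add_right_iff)
  moreover have "\<not> H dvd pderiv H"
  proof
    assume "H dvd pderiv H"
    moreover have "pderiv H \<noteq> 0"
      using H(3) by (simp add: pderiv_eq_0_iff)
    ultimately have "degree H \<le> degree (pderiv H)"
      by (rule dvd_imp_degree_le)
    with H(3) show False
      by (simp add: degree_pderiv)
  qed
  ultimately have "H dvd K"
    using H(1) prime_dvd_mult_iff by blast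
  then show thesis
    using K H(3) by (intro that[of H]) auto
qed

lemma poly2_square_factor_critical:
  fixes F H :: "complex poly poly"
  assumes "H * H dvd F" "poly2 H s t = 0"
  shows "poly2 F s t = 0 \<and> poly2 (pderiv F) s t = 0 \<and> poly2 (map_poly pderiv F) s t = 0"
proof -
  from assms(1) obtain L where F: "F = H * H * L"
    by (elim dvdE)
  let ?h = "\<lambda>G s. poly2 G s t" and ?h' = "\<lambda>G s. poly2 (map_poly pderiv G) s t"
  have "((\<lambda>s. ?h H s * ?h H s * ?h L s) has_field_derivative
          ?h' H s * ?h H s * ?h L s + ?h H s * ?h' H s * ?h L s + ?h H s * ?h H s * ?h' L s) (at s)"
    by (auto intro!: derivative_eq_intros has_field_derivative_poly2_left simp: algebra_simps)
  moreover have "((\<lambda>s. ?h H s * ?h H s * ?h L s) has_field_derivative ?h' F s) (at s)"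
    using has_field_derivative_poly2_left[of F t s] by (simp add: F poly2_mult)
  ultimately have "?h' F s = 0"
    using assms(2) DERIV_unique by fastforce
  then show ?thesis
    using assms(2) by (simp add: F pderiv_mult poly2_mult poly2_add)
qed

lemma poly_resultant_pderiv_eq_0:
  fixes F :: "complex poly poly"
  assumes lc: "poly (lead_coeff F) s \<noteq> 0"
    and zero: "poly2 F s t = 0" "poly2 (pderiv F) s t = 0"
  shows "poly (resultant F (pderiv F)) s = 0"
proof (cases "degree F = 0")
  case True
  then obtain c where "F = [:c:]"
    by (rule degree_eq_zeroE)
  with lc zero(1) show ?thesis
    by simp
next
  case degF: False
  define h where "h = (\<lambda>c::complex poly. poly c s)"
  interpret h: comm_ring_hom h
    unfolding h_def ..
  have "coeff (map_poly h F) (degree F) \<noteq> 0"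
    using lc by (simp add: h_def coeff_map_poly)
  then have dF: "degree (map_poly h F) = degree F"
    by (metis degree_map_poly_le le_antisym le_degree)
  have "coeff (map_poly h (pderiv F)) (degree F - 1) \<noteq> 0"
    using lc degF by (simp add: h_def coeff_map_poly coeff_pderiv)
  then have dG: "degree (map_poly h (pderiv F)) = degree (pderiv F)"
    by (metis degree_map_poly_le degree_pderiv le_antisym le_degree)
  have "[:-t, 1:] dvd gcd (map_poly h F) (map_poly h (pderiv F))"
    using zero by (simp add: h_def poly2_def poly_eq_0_iff_dvd)
  moreover have "gcd (map_poly h F) (map_poly h (pderiv F)) \<noteq> 0"
    using dF degF by auto
  ultimately have "degree [:-t, 1:] \<le> degree (gcd (map_poly h F) (map_poly h (pderiv F)))"
    by (rule dvd_imp_degree_le)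
  then have "resultant (map_poly h F) (map_poly h (pderiv F)) = 0"
    by (simp add: resultant_0_gcd)
  then have "h (resultant F (pderiv F)) = 0"
    by (simp add: h.resultant_map_poly dF dG)
  then show ?thesis
    by (simp add: h_def)
qed

(* Without singular points F is squarefree in t, so the resultant of F and its t-derivative is a
   nonzero polynomial in s; above its roots and those of the leading coefficient lie finitely
   many zeros of F. *)
lemma finite_poly2_critical_points:
  fixes F :: "complex poly poly"
  assumes nonsingular: "\<And>s t. poly2 F s t = 0 \<Longrightarrow> poly2 (pderiv F) s t = 0 \<Longrightarrow>
      poly2 (map_poly pderiv F) s t \<noteq> 0"
    and no_vertical_line: "\<And>s. \<exists>t. poly2 F s t \<noteq> 0"
  shows "finite {(s, t). poly2 F s t = 0 \<and> poly2 (pderiv F) s t = 0}"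
proof -
  have "F \<noteq> 0"
    using no_vertical_line by auto
  have R: "resultant F (pderiv F) \<noteq> 0"
  proof
    assume "resultant F (pderiv F) = 0"
    then obtain H where "degree H \<noteq> 0" "H * H dvd F"
      using square_factor_if_resultant_pderiv_eq_0 \<open>F \<noteq> 0\<close> by blast
    moreover from \<open>degree H \<noteq> 0\<close> obtain s t where "poly2 H s t = 0"
      by (rule poly2_has_zero)
    ultimately show False
      using nonsingular poly2_square_factor_critical by blast
  qed
  define S where "S = {s. poly (lead_coeff F) s = 0} \<union> {s. poly (resultant F (pderiv F)) s = 0}"
  have "finite S"
    using R \<open>F \<noteq> 0\<close> by (simp add: S_def poly_roots_finite)
  moreover have "finite {t. poly2 F s t = 0}" for s
    using no_vertical_line[of s] poly_roots_finite[of "map_poly (\<lambda>c. poly c s) F"]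
    by (force simp: poly2_def)
  ultimately have "finite (\<Union>s\<in>S. {s} \<times> {t. poly2 F s t = 0})"
    by blast
  moreover have "{(s, t). poly2 F s t = 0 \<and> poly2 (pderiv F) s t = 0} \<subseteq> (\<Union>s\<in>S. {s} \<times> {t. poly2 F s t = 0})"
    using poly_resultant_pderiv_eq_0 by (force simp: S_def)
  ultimately show ?thesis
    using finite_subset by blast
qed

section \<open>Evaluation and partial derivatives\<close>

definition mon_val :: "(nat \<Rightarrow>\<^sub>0 nat) \<Rightarrow> (nat \<Rightarrow> complex) \<Rightarrow> complex" where
  "mon_val m x = (\<Prod>j\<in>Poly_Mapping.keys m. x j ^ Poly_Mapping.lookup m j)"

lemma mon_val_superset:
  "finite J \<Longrightarrow> Poly_Mapping.keys m \<subseteq> J \<Longrightarrow> mon_val m x = (\<Prod>j\<in>J. x j ^ Poly_Mapping.lookup m j)"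
  unfolding mon_val_def by (rule prod.mono_neutral_left) (auto simp: in_keys_iff)

lemma mon_val_0 [simp]: "mon_val 0 x = 1"
  by (simp add: mon_val_def)

lemma mon_val_single: "mon_val (Poly_Mapping.single i k) x = x i ^ k"
  by (cases "k = 0") (auto simp: mon_val_def)

lemma mon_val_add: "mon_val (m + n) x = mon_val m x * mon_val n x"
proof -
  let ?J = "Poly_Mapping.keys m \<union> Poly_Mapping.keys n"
  have "mon_val (m + n) x = (\<Prod>j\<in>?J. x j ^ Poly_Mapping.lookup m j * x j ^ Poly_Mapping.lookup n j)"
    using keys_add[of m n] by (subst mon_val_superset[of ?J]) (auto simp: lookup_add power_add)
  also have "\<dots> = mon_val m x * mon_val n x"
    by (subst (1 2) mon_val_superset[of ?J]) (auto simp: prod.distrib)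
  finally show ?thesis .
qed

lemma mon_val_in_S:
  "Poly_Mapping.keys m \<subseteq> {1,2,3,4} \<Longrightarrow> mon_val m x = x 1 ^ Poly_Mapping.lookup m 1 *
     x 2 ^ Poly_Mapping.lookup m 2 * x 3 ^ Poly_Mapping.lookup m 3 * x 4 ^ Poly_Mapping.lookup m 4"
  by (subst mon_val_superset[of "{1,2,3,4}"]) auto

lemma eval_altdef: "eval p x = (\<Sum>m\<in>Poly_Mapping.keys p. Poly_Mapping.lookup p m * mon_val m x)"
  unfolding eval_def mon_val_def ..

lemma eval_superset:
  "finite M \<Longrightarrow> Poly_Mapping.keys p \<subseteq> M \<Longrightarrow>
     eval p x = (\<Sum>m\<in>M. Poly_Mapping.lookup p m * mon_val m x)"
  unfolding eval_altdef by (rule sum.mono_neutral_left) (auto simp: in_keys_iff)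

lemma eval_0 [simp]: "eval 0 x = 0"
  by (simp add: eval_def)

lemma eval_single: "eval (Poly_Mapping.single m c) x = c * mon_val m x"
  by (cases "c = 0") (auto simp: eval_altdef)

lemma eval_add: "eval (p + q) x = eval p x + eval q x"
proof -
  let ?M = "Poly_Mapping.keys p \<union> Poly_Mapping.keys q"
  have "eval (p + q) x = (\<Sum>m\<in>?M. Poly_Mapping.lookup (p + q) m * mon_val m x)"
    using keys_add[of p q] by (intro eval_superset) auto
  also have "\<dots> = eval p x + eval q x"
    by (subst (1 2) eval_superset[of ?M]) (auto simp: lookup_add distrib_right sum.distrib)
  finally show ?thesis .
qed

lemma eval_sum: "eval (sum F I) x = (\<Sum>i\<in>I. eval (F i) x)"
  by (induction I rule: infinite_finite_induct) (auto simp: eval_add)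

lemma poly_mapping_sum_single:
  "p = (\<Sum>k\<in>Poly_Mapping.keys p. Poly_Mapping.single k (Poly_Mapping.lookup p k))"
  by (rule poly_mapping_eqI) (simp add: lookup_sum lookup_single when_def in_keys_iff)

lemma eval_mult: "eval (p * q) x = eval p x * eval q x"
proof -
  let ?c = "Poly_Mapping.lookup p" and ?d = "Poly_Mapping.lookup q"
  have "p * q = (\<Sum>k\<in>Poly_Mapping.keys p. \<Sum>l\<in>Poly_Mapping.keys q.
      Poly_Mapping.single (k + l) (?c k * ?d l))"
    by (subst poly_mapping_sum_single, subst (2) poly_mapping_sum_single)
      (simp add: sum_product mult_single)
  then have "eval (p * q) x = (\<Sum>k\<in>Poly_Mapping.keys p. \<Sum>l\<in>Poly_Mapping.keys q.
      ?c k * mon_val k x * (?d l * mon_val l x))"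
    by (simp add: eval_sum eval_single mon_val_add mult_ac)
  then show ?thesis
    by (simp add: eval_altdef sum_product)
qed

lemma eval_var: "eval (var i) x = x i"
  by (simp add: var_def eval_single mon_val_single)

lemma eval_power: "eval (p ^ k) x = eval p x ^ k"
  by (induction k) (auto simp: eval_mult eval_single simp flip: single_one)

(* Simp rewrites the numeral 1 :: nat to Suc 0, so facts mentioning unit_exp or a variable
   index 1 are handed to simp with using rather than as rewrite rules. *)
abbreviation unit_exp :: "nat \<Rightarrow> nat \<Rightarrow>\<^sub>0 nat" where
  "unit_exp i \<equiv> Poly_Mapping.single i 1"

lemma lookup_pderiv:
  "Poly_Mapping.lookup (Defs.pderiv i p) m =
     of_nat (Poly_Mapping.lookup m i + 1) * Poly_Mapping.lookup p (m + unit_exp i)"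
proof -
  have "finite ((\<lambda>m. m + unit_exp i) -` Poly_Mapping.keys p)"
    by (rule finite_vimageI) (auto simp: inj_def)
  then have "finite {m. of_nat (Poly_Mapping.lookup m i + 1) * Poly_Mapping.lookup p (m + unit_exp i) \<noteq> (0::complex)}"
    by (rule rev_finite_subset) (auto simp: in_keys_iff)
  then show ?thesis
    by (simp add: Defs.pderiv_def Abs_poly_mapping_inverse)
qed

lemma add_unit_exp_in_keys_if_in_keys_pderiv:
  "m \<in> Poly_Mapping.keys (Defs.pderiv i p) \<Longrightarrow> m + unit_exp i \<in> Poly_Mapping.keys p"
  by (auto simp: in_keys_iff lookup_pderiv)

lemma minus_unit_exp_add_cancel:
  "Poly_Mapping.lookup m i \<noteq> 0 \<Longrightarrow> m - unit_exp i + unit_exp i = m"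
  by (rule poly_mapping_eqI) (auto simp: lookup_add lookup_minus lookup_single when_def)

lemma mon_val_minus_unit_exp:
  "Poly_Mapping.lookup m i \<noteq> 0 \<Longrightarrow> mon_val m x = x i * mon_val (m - unit_exp i) x"
  by (metis minus_unit_exp_add_cancel mon_val_add mon_val_single mult.commute power_one_right)

lemma eval_pderiv:
  "eval (Defs.pderiv i p) x = (\<Sum>m\<in>Poly_Mapping.keys p.
      Poly_Mapping.lookup p m * of_nat (Poly_Mapping.lookup m i) * mon_val (m - unit_exp i) x)"
proof -
  let ?K = "{m \<in> Poly_Mapping.keys p. Poly_Mapping.lookup m i \<noteq> 0}"
  have inj: "inj_on (\<lambda>m. m - unit_exp i) ?K"
  proof (rule inj_onI)
    fix m n
    assume "m \<in> ?K" "n \<in> ?K" "m - unit_exp i = n - unit_exp i"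
    then show "m = n"
      using minus_unit_exp_add_cancel[of m i] minus_unit_exp_add_cancel[of n i] by simp
  qed
  have sub: "Poly_Mapping.keys (Defs.pderiv i p) \<subseteq> (\<lambda>m. m - unit_exp i) ` ?K"
  proof
    fix m assume "m \<in> Poly_Mapping.keys (Defs.pderiv i p)"
    then have "m + unit_exp i \<in> ?K"
      using add_unit_exp_in_keys_if_in_keys_pderiv[of m i p] by (simp add: lookup_add)
    then show "m \<in> (\<lambda>m. m - unit_exp i) ` ?K"
      by (rule rev_image_eqI) simp
  qed
  have "eval (Defs.pderiv i p) x = (\<Sum>m\<in>(\<lambda>m. m - unit_exp i) ` ?K.
      Poly_Mapping.lookup (Defs.pderiv i p) m * mon_val m x)"
    by (rule eval_superset[OF _ sub]) simp
  also have "\<dots> = (\<Sum>m\<in>?K.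
      Poly_Mapping.lookup (Defs.pderiv i p) (m - unit_exp i) * mon_val (m - unit_exp i) x)"
    by (rule sum.reindex[OF inj, unfolded comp_def])
  also have "\<dots> = (\<Sum>m\<in>?K.
      Poly_Mapping.lookup p m * of_nat (Poly_Mapping.lookup m i) * mon_val (m - unit_exp i) x)"
  proof (intro sum.cong refl)
    fix m assume "m \<in> ?K"
    then show "Poly_Mapping.lookup (Defs.pderiv i p) (m - unit_exp i) * mon_val (m - unit_exp i) x =
        Poly_Mapping.lookup p m * of_nat (Poly_Mapping.lookup m i) * mon_val (m - unit_exp i) x"
      using minus_unit_exp_add_cancel[of m i] by (simp add: lookup_pderiv lookup_minus)
  qed
  also have "\<dots> = (\<Sum>m\<in>Poly_Mapping.keys p.
      Poly_Mapping.lookup p m * of_nat (Poly_Mapping.lookup m i) * mon_val (m - unit_exp i) x)"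
    by (rule sum.mono_neutral_left) auto
  finally show ?thesis .
qed

lemma eval_logder_sum:
  "eval (logder i p) x = (\<Sum>m\<in>Poly_Mapping.keys p.
      Poly_Mapping.lookup p m * of_nat (Poly_Mapping.lookup m i) * mon_val m x)"
  unfolding logder_def eval_mult eval_var eval_pderiv sum_distrib_left
proof (intro sum.cong refl)
  fix m
  show "x i * (Poly_Mapping.lookup p m * of_nat (Poly_Mapping.lookup m i) * mon_val (m - unit_exp i) x) =
      Poly_Mapping.lookup p m * of_nat (Poly_Mapping.lookup m i) * mon_val m x"
    using mon_val_minus_unit_exp[of m i x] by (cases "Poly_Mapping.lookup m i = 0") auto
qed

lemma eval_logder: "eval (logder i p) x = x i * eval (Defs.pderiv i p) x"
  by (simp add: logder_def eval_mult eval_var)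

(* Not a simp rule: its right-hand side matches its left-hand side again. *)
lemma mon_val_upd: "mon_val m (x(i := t)) = t ^ Poly_Mapping.lookup m i * mon_val m (x(i := 1))"
proof -
  have split: "mon_val m y = y i ^ Poly_Mapping.lookup m i *
      (\<Prod>j\<in>Poly_Mapping.keys m - {i}. y j ^ Poly_Mapping.lookup m j)" for y
    by (subst mon_val_superset[of "insert i (Poly_Mapping.keys m)"]) (auto simp: prod.insert_remove)
  have "(\<Prod>j\<in>Poly_Mapping.keys m - {i}. (x(i := t)) j ^ Poly_Mapping.lookup m j) =
      (\<Prod>j\<in>Poly_Mapping.keys m - {i}. (x(i := 1)) j ^ Poly_Mapping.lookup m j)"
    by (intro prod.cong) auto
  then show ?thesis
    using split[of "x(i := t)"] split[of "x(i := 1)"] by simp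
qed

lemma mon_val_upd_upd:
  assumes "i \<noteq> j"
  shows "mon_val m (x(i := s, j := t)) =
    s ^ Poly_Mapping.lookup m i * t ^ Poly_Mapping.lookup m j * mon_val m (x(i := 1, j := 1))"
proof -
  have "mon_val m (x(i := s, j := t)) = t ^ Poly_Mapping.lookup m j * mon_val m (x(j := 1, i := s))"
    using mon_val_upd[of m "x(i := s)" j t] by (subst fun_upd_twist[OF assms(1)[symmetric]]) simp
  also have "\<dots> = t ^ Poly_Mapping.lookup m j * (s ^ Poly_Mapping.lookup m i * mon_val m (x(i := 1, j := 1)))"
    using mon_val_upd[of m "x(j := 1)" i s] by (subst (asm) fun_upd_twist[OF assms(1)[symmetric]]) simp
  finally show ?thesis
    by (simp add: mult_ac)
qed

lemma eval_upd_altdef: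
  "eval p (x(i := t)) = (\<Sum>m\<in>Poly_Mapping.keys p.
     Poly_Mapping.lookup p m * mon_val m (x(i := 1)) * t ^ Poly_Mapping.lookup m i)"
  unfolding eval_altdef by (intro sum.cong refl) (simp add: mon_val_upd[of _ x i t])

lemma has_field_derivative_eval_upd:
  "((\<lambda>t. eval p (x(i := t))) has_field_derivative eval (Defs.pderiv i p) (x(i := t))) (at t)"
proof -
  let ?c = "Poly_Mapping.lookup p" and ?k = "\<lambda>m. Poly_Mapping.lookup m i"
  have "eval (Defs.pderiv i p) (x(i := t)) =
      (\<Sum>m\<in>Poly_Mapping.keys p. ?c m * mon_val m (x(i := 1)) * (of_nat (?k m) * t ^ (?k m - 1)))"
    unfolding eval_pderiv
  proof (intro sum.cong refl)
    fix m
    show "?c m * of_nat (?k m) * mon_val (m - unit_exp i) (x(i := t)) =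
        ?c m * mon_val m (x(i := 1)) * (of_nat (?k m) * t ^ (?k m - 1))"
      using mon_val_minus_unit_exp[of m i "x(i := 1)"] mon_val_upd[of "m - unit_exp i" x i t]
      by (cases "?k m = 0") (auto simp: lookup_minus)
  qed
  moreover have "(\<lambda>t. eval p (x(i := t))) =
      (\<lambda>t. \<Sum>m\<in>Poly_Mapping.keys p. ?c m * mon_val m (x(i := 1)) * t ^ ?k m)"
    by (simp add: eval_upd_altdef)
  ultimately show ?thesis
    by (simp only:) (intro DERIV_sum DERIV_cmult, use DERIV_power[OF DERIV_ident] in simp)
qed

lemma eval_upd_polynomial:
  obtains P where "\<And>t. eval p (x(i := t)) = poly P t"
proof
  fix t
  show "eval p (x(i := t)) = poly (\<Sum>m\<in>Poly_Mapping.keys p.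
      monom (Poly_Mapping.lookup p m * mon_val m (x(i := 1))) (Poly_Mapping.lookup m i)) t"
    by (simp add: eval_upd_altdef poly_sum poly_monom)
qed

lemma eval_upd_upd_polynomial:
  assumes "i \<noteq> j"
  obtains F where "\<And>s t. eval p (x(i := s, j := t)) = poly2 F s t"
proof
  fix s t
  show "eval p (x(i := s, j := t)) = poly2 (\<Sum>m\<in>Poly_Mapping.keys p.
      monom (monom (Poly_Mapping.lookup p m * mon_val m (x(i := 1, j := 1))) (Poly_Mapping.lookup m i))
        (Poly_Mapping.lookup m j)) s t"
    unfolding eval_altdef poly2_sum poly2_monom
    by (intro sum.cong refl) (simp add: mon_val_upd_upd[OF assms, of _ x s t] poly_monom mult_ac)
qed

lemma finite_zeros_on_line:
  assumes "eval p (x(i := t0)) \<noteq> 0"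
  shows "finite {t. eval p (x(i := t)) = 0}"
proof -
  obtain P where P: "\<And>t. eval p (x(i := t)) = poly P t"
    using eval_upd_polynomial by blast
  with assms have "P \<noteq> 0"
    by auto
  then show ?thesis
    by (simp add: P poly_roots_finite)
qed

lemma eval_on_line_zero_or_constant:
  "(\<exists>t. eval p (x(i := t)) = 0) \<or> (\<exists>d. \<forall>t. eval p (x(i := t)) = d)"
proof -
  obtain P where P: "\<And>t. eval p (x(i := t)) = poly P t"
    using eval_upd_polynomial by blast
  show ?thesis
  proof (cases "degree P = 0")
    case True
    then obtain d where "P = [:d:]"
      by (rule degree_eq_zeroE)
    then show ?thesis
      by (simp add: P)
  next
    case False
    then have "\<not> constant (poly P)"
      by (simp add: constant_degree)
    then show ?thesis
      using fundamental_theorem_of_algebra P by metis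
  qed
qed

lemma pderiv_eval_zero_on_zero_line:
  assumes "\<And>t. eval p (x(i := t)) = 0"
  shows "eval (Defs.pderiv i p) (x(i := t)) = 0"
proof -
  have "((\<lambda>t. eval p (x(i := t))) has_field_derivative 0) (at t)"
    by (simp add: assms)
  then show ?thesis
    using has_field_derivative_eval_upd DERIV_unique by blast
qed

lemma eval_upd_0_eq_0:
  assumes "0 < k" and "\<And>w. w \<noteq> 0 \<Longrightarrow> eval p (x(i := w)) = w ^ k * d"
  shows "eval p (x(i := 0)) = 0"
proof -
  have "((\<lambda>w. eval p (x(i := w))) \<longlongrightarrow> eval p (x(i := 0))) (at 0)"
    using DERIV_isCont[OF has_field_derivative_eval_upd] by (rule isContD)
  moreover have "((\<lambda>w. eval p (x(i := w))) \<longlongrightarrow> 0 ^ k * d) (at 0)"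
    by (rule Lim_transform_eventually[of "\<lambda>w. w ^ k * d"])
      (auto intro!: tendsto_eq_intros simp: eventually_at_filter assms(2))
  ultimately show ?thesis
    using assms(1) tendsto_unique[OF at_neq_bot] by fastforce
qed

lemma finite_plane_critical_points:
  assumes "i \<noteq> j"
    and nonsingular: "\<And>s t. eval p (x(i := s, j := t)) = 0 \<Longrightarrow>
      eval (Defs.pderiv j p) (x(i := s, j := t)) = 0 \<Longrightarrow> eval (Defs.pderiv i p) (x(i := s, j := t)) \<noteq> 0"
    and no_line: "\<And>s. \<exists>t. eval p (x(i := s, j := t)) \<noteq> 0"
  shows "finite {(s, t). eval p (x(i := s, j := t)) = 0 \<and> eval (Defs.pderiv j p) (x(i := s, j := t)) = 0}"
proof -
  obtain F where F: "\<And>s t. eval p (x(i := s, j := t)) = poly2 F s t"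
    using eval_upd_upd_polynomial[OF assms(1)] by blast
  have F_t: "poly2 (pderiv F) s t = eval (Defs.pderiv j p) (x(i := s, j := t))" for s t
    using has_field_derivative_poly2_right[of F s t] has_field_derivative_eval_upd[of p "x(i := s)" j t]
    by (simp add: F[symmetric] DERIV_unique)
  have F_s: "poly2 (map_poly pderiv F) s t = eval (Defs.pderiv i p) (x(i := s, j := t))" for s t
    using has_field_derivative_poly2_left[of F t s] has_field_derivative_eval_upd[of p "x(j := t)" i s]
    by (simp add: F[symmetric] fun_upd_twist[OF assms(1)] DERIV_unique)
  have "finite {(s, t). poly2 F s t = 0 \<and> poly2 (pderiv F) s t = 0}"
    using nonsingular no_line by (intro finite_poly2_critical_points) (auto simp: F F_t F_s)
  then show ?thesis
    by (simp add: F F_t)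
qed

section \<open>Degrees, the torus action and the ideal J_1\<close>

lemma in_S_1: "in_S 1"
  by (simp add: in_S_def)

lemma in_S_var: "i \<in> {1,2,3,4} \<Longrightarrow> in_S (var i)"
  by (simp add: in_S_def var_def)

lemma in_S_mult:
  assumes "in_S p" "in_S q"
  shows "in_S (p * q)"
  unfolding in_S_def
proof
  fix m assume "m \<in> Poly_Mapping.keys (p * q)"
  then obtain k l where "m = k + l" "k \<in> Poly_Mapping.keys p" "l \<in> Poly_Mapping.keys q"
    using keys_mult by blast
  with assms show "Poly_Mapping.keys m \<subseteq> {1, 2, 3, 4}"
    unfolding in_S_def using keys_add[of k l] by blast
qed

lemma in_S_prod: "(\<And>j. j \<in> J \<Longrightarrow> in_S (g j)) \<Longrightarrow> in_S (\<Prod>j\<in>J. g j)"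
  by (induction J rule: infinite_finite_induct) (auto simp: in_S_1 in_S_mult)

lemma in_S_deg_imp_in_S: "in_S_deg r a b p \<Longrightarrow> in_S p"
  by (simp add: in_S_deg_def)

lemma in_S_deg_1: "in_S_deg r 0 0 1"
  by (simp add: in_S_deg_def in_S_def mon_deg_def)

lemma in_S_deg_var:
  "i \<in> {1,2,3,4} \<Longrightarrow> mon_deg r (unit_exp i) = (a, b) \<Longrightarrow> in_S_deg r a b (var i)"
  by (simp add: in_S_deg_def in_S_var) (simp add: var_def)

lemma in_S_deg_mult:
  assumes "in_S_deg r a1 b1 p" "in_S_deg r a2 b2 q"
  shows "in_S_deg r (a1 + a2) (b1 + b2) (p * q)"
  unfolding in_S_deg_def
proof (intro conjI ballI)
  show "in_S (p * q)"
    using assms by (intro in_S_mult in_S_deg_imp_in_S)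
  fix m assume "m \<in> Poly_Mapping.keys (p * q)"
  then obtain k l where "m = k + l" "k \<in> Poly_Mapping.keys p" "l \<in> Poly_Mapping.keys q"
    using keys_mult by blast
  with assms show "mon_deg r m = (a1 + a2, b1 + b2)"
    by (auto simp: in_S_deg_def mon_deg_def lookup_add algebra_simps)
qed

lemma in_S_deg_power: "in_S_deg r a b p \<Longrightarrow> in_S_deg r (k * a) (k * b) (p ^ k)"
  by (induction k) (auto simp: in_S_deg_1 dest: in_S_deg_mult)

lemma in_S_deg_pderiv:
  assumes "in_S_deg r a b p" "mon_deg r (unit_exp i) = (ai, bi)"
  shows "in_S_deg r (a - ai) (b - bi) (Defs.pderiv i p)"
  unfolding in_S_deg_def in_S_def
proof (intro conjI ballI)
  fix m assume "m \<in> Poly_Mapping.keys (Defs.pderiv i p)"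
  then have m: "m + unit_exp i \<in> Poly_Mapping.keys p"
    by (rule add_unit_exp_in_keys_if_in_keys_pderiv)
  have "Poly_Mapping.keys m \<subseteq> Poly_Mapping.keys (m + unit_exp i)"
    by (auto simp: in_keys_iff lookup_add)
  with m assms(1) show "Poly_Mapping.keys m \<subseteq> {1, 2, 3, 4}"
    by (auto simp: in_S_deg_def in_S_def)
  from m assms(1) have "mon_deg r (m + unit_exp i) = (a, b)"
    by (simp add: in_S_deg_def)
  with assms(2) show "mon_deg r m = (a - ai, b - bi)"
    by (auto simp: mon_deg_def lookup_add algebra_simps)
qed

lemma eval_torus_action:
  assumes "in_S_deg r a b p"
    and "y 1 = l * x 1" "y 2 = u * x 2" "y 3 = l * x 3" "y 4 = l ^ r * u * x 4"
  shows "eval p y = l ^ a * u ^ b * eval p x"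
  unfolding eval_altdef sum_distrib_left
proof (intro sum.cong refl)
  fix m assume "m \<in> Poly_Mapping.keys p"
  with assms(1) have "Poly_Mapping.keys m \<subseteq> {1,2,3,4}" and "mon_deg r m = (a, b)"
    by (auto simp: in_S_deg_def in_S_def)
  then show "Poly_Mapping.lookup p m * mon_val m y = l ^ a * u ^ b * (Poly_Mapping.lookup p m * mon_val m x)"
    using assms(2-) by (auto simp: mon_val_in_S mon_deg_def power_mult_distrib power_add power_mult mult_ac)
qed

lemma hr_equiv_eval_eq_0_iff:
  assumes "hr_equiv r x y" "in_S_deg r a b p"
  shows "eval p y = 0 \<longleftrightarrow> eval p x = 0"
proof -
  from assms(1) obtain l u where "l \<noteq> 0" "u \<noteq> 0"
    "y 1 = l * x 1" "y 2 = u * x 2" "y 3 = l * x 3" "y 4 = l ^ r * u * x 4"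
    by (auto simp: hr_equiv_def)
  moreover from this(3-) have "eval p y = l ^ a * u ^ b * eval p x"
    by (rule eval_torus_action[OF assms(2)])
  ultimately show ?thesis
    by simp
qed

lemma euler_D1:
  assumes "in_S_deg r a b p"
  shows "of_nat a * eval p x = eval (logder 1 p) x + eval (logder 3 p) x + of_nat r * eval (logder 4 p) x"
  unfolding eval_logder_sum eval_altdef[of p x] sum_distrib_left sum.distrib[symmetric]
proof (intro sum.cong refl)
  fix m assume "m \<in> Poly_Mapping.keys p"
  with assms have "mon_deg r m = (a, b)"
    by (simp add: in_S_deg_def)
  then show "of_nat a * (Poly_Mapping.lookup p m * mon_val m x) =
      Poly_Mapping.lookup p m * of_nat (Poly_Mapping.lookup m 1) * mon_val m x +
      Poly_Mapping.lookup p m * of_nat (Poly_Mapping.lookup m 3) * mon_val m x +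
      of_nat r * (Poly_Mapping.lookup p m * of_nat (Poly_Mapping.lookup m 4) * mon_val m x)"
    by (auto simp: mon_deg_def algebra_simps)
qed

lemma euler_D2:
  assumes "in_S_deg r a b p"
  shows "of_nat b * eval p x = eval (logder 2 p) x + eval (logder 4 p) x"
  unfolding eval_logder_sum eval_altdef[of p x] sum_distrib_left sum.distrib[symmetric]
proof (intro sum.cong refl)
  fix m assume "m \<in> Poly_Mapping.keys p"
  with assms have "mon_deg r m = (a, b)"
    by (simp add: in_S_deg_def)
  then show "of_nat b * (Poly_Mapping.lookup p m * mon_val m x) =
      Poly_Mapping.lookup p m * of_nat (Poly_Mapping.lookup m 2) * mon_val m x +
      Poly_Mapping.lookup p m * of_nat (Poly_Mapping.lookup m 4) * mon_val m x"
    by (auto simp: mon_deg_def algebra_simps)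
qed

lemma mult_logder_in_J0:
  assumes "in_S h" "k \<in> {1,2,3,4}"
  shows "h * logder k f \<in> J0 f"
  unfolding J0_def
proof (intro CollectI exI conjI allI)
  show "in_S (if i = k then h else 0)" for i
    using assms(1) by (simp add: in_S_def)
  show "h * logder k f = (\<Sum>i\<in>{1,2,3,4}. (if i = k then h else 0) * logder i f)"
    using assms(2) by (simp add: if_distrib[of "\<lambda>g. g * _"] cong: if_cong)
qed

lemma mult_pderiv_in_J1_deg:
  assumes f: "in_S_deg r a b f" and i: "i \<in> {1,2,3,4}"
    and deg_i: "mon_deg r (unit_exp i) = (ai, bi)" "ai \<le> a" "bi \<le> b"
    and q: "in_S_deg r ai bi q"
  shows "q * Defs.pderiv i f \<in> J1_deg r a b f"
proof -
  have deg: "in_S_deg r a b (q * Defs.pderiv i f)"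
    using in_S_deg_mult[OF q in_S_deg_pderiv[OF f deg_i(1)]] deg_i(2,3) by simp
  let ?others = "\<Prod>j\<in>{1,2,3,4} - {i}. var j"
  have "var 1 * var 2 * var 3 * var 4 = (\<Prod>j\<in>{1,2,3,4::nat}. var j)"
    by (simp add: mult_ac)
  also have "\<dots> = var i * ?others"
    using i by (simp add: prod.remove)
  finally have "(var 1 * var 2 * var 3 * var 4) * (q * Defs.pderiv i f) = (q * ?others) * logder i f"
    by (simp add: logder_def mult_ac)
  also have "\<dots> \<in> J0 f"
    using q i by (intro mult_logder_in_J0 in_S_mult in_S_prod in_S_var in_S_deg_imp_in_S) auto
  finally show ?thesis
    using deg by (simp add: J1_deg_def J1_def in_S_deg_imp_in_S)
qed

section \<open>Torus orbits\<close>

abbreviation ones :: "nat \<Rightarrow> complex" where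
  "ones \<equiv> \<lambda>_. 1"

(* Orbit representatives (s,1,1,t), (s,0,1,1), (1,1,0,t) and (1,0,0,1) for the loci x_2 x_3 /= 0,
   x_2 = 0, x_3 = 0 and x_2 = x_3 = 0. *)
definition normal_forms :: "(nat \<Rightarrow> complex) set" where
  "normal_forms = (\<lambda>(s, t). ones(1 := s, 4 := t)) ` UNIV \<union> (\<lambda>s. ones(2 := 0, 1 := s)) ` UNIV \<union>
     (\<lambda>t. ones(3 := 0, 4 := t)) ` UNIV \<union> {ones(2 := 0, 3 := 0)}"

lemma normal_forms_in_U: "p \<in> normal_forms \<Longrightarrow> in_U p"
  by (auto simp: normal_forms_def in_U_def)

lemma hr_equiv_normal_form:
  assumes "in_U x"
  shows "\<exists>p\<in>normal_forms. hr_equiv r p x"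
proof (cases "x 3 = 0")
  case False
  show ?thesis
  proof (cases "x 2 = 0")
    case True
    with assms have "x 4 \<noteq> 0"
      by (auto simp: in_U_def)
    with \<open>x 3 \<noteq> 0\<close> True have "hr_equiv r (ones(2 := 0, 1 := x 1 / x 3)) x"
      unfolding hr_equiv_def by (intro exI[of _ "x 3"] exI[of _ "x 4 / x 3 ^ r"]) auto
    then show ?thesis
      by (auto simp: normal_forms_def)
  next
    case False
    with \<open>x 3 \<noteq> 0\<close> have "hr_equiv r (ones(1 := x 1 / x 3, 4 := x 4 / (x 3 ^ r * x 2))) x"
      unfolding hr_equiv_def by (intro exI[of _ "x 3"] exI[of _ "x 2"]) auto
    then show ?thesis
      by (force simp: normal_forms_def)
  qed
next
  case True
  with assms have "x 1 \<noteq> 0"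
    by (auto simp: in_U_def)
  show ?thesis
  proof (cases "x 2 = 0")
    case True
    with assms \<open>x 3 = 0\<close> have "x 4 \<noteq> 0"
      by (auto simp: in_U_def)
    with \<open>x 1 \<noteq> 0\<close> \<open>x 3 = 0\<close> True have "hr_equiv r (ones(2 := 0, 3 := 0)) x"
      unfolding hr_equiv_def by (intro exI[of _ "x 1"] exI[of _ "x 4 / x 1 ^ r"]) auto
    then show ?thesis
      by (auto simp: normal_forms_def)
  next
    case False
    with \<open>x 1 \<noteq> 0\<close> \<open>x 3 = 0\<close> have "hr_equiv r (ones(3 := 0, 4 := x 4 / (x 1 ^ r * x 2))) x"
      unfolding hr_equiv_def by (intro exI[of _ "x 1"] exI[of _ "x 2"]) auto
    then show ?thesis
      by (auto simp: normal_forms_def)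
  qed
qed

lemma hr_equiv_of_proportional_values:
  fixes x y F G :: "nat \<Rightarrow> complex" and c :: complex
  assumes "c \<noteq> 0" and "x 1 \<noteq> 0 \<or> x 3 \<noteq> 0" and "y 1 \<noteq> 0 \<or> y 3 \<noteq> 0"
    and "F 4 \<noteq> 0" "G 4 \<noteq> 0" "G 1 \<noteq> 0 \<or> G 3 \<noteq> 0"
    and x13: "\<And>i j. i \<in> {1,3} \<Longrightarrow> j \<in> {1,3} \<Longrightarrow> x j * F i = c * (y j * G i)"
    and x4: "x 4 * F 4 = c * (y 4 * G 4)"
    and x2: "\<And>j. j \<in> {1,3} \<Longrightarrow> x 2 * x j ^ r * F 4 = c * (y 2 * y j ^ r * G 4)"
  shows "hr_equiv r x y"
proof -
  obtain i where i: "i \<in> {1,3}" "G i \<noteq> 0"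
    using assms(6) by blast
  have "F i \<noteq> 0"
    using x13[OF i(1)] assms(1,3) i(2) by force
  define l where "l = F i / (c * G i)"
  have l: "l \<noteq> 0" "\<And>j. j \<in> {1,3} \<Longrightarrow> y j = l * x j"
    using \<open>F i \<noteq> 0\<close> assms(1) i(2) x13[OF i(1)] by (auto simp: l_def field_simps)
  obtain j where j: "j \<in> {1,3}" "x j \<noteq> 0"
    using assms(2) by blast
  have "x j ^ r * (x 2 * F 4) = x j ^ r * (c * l ^ r * y 2 * G 4)"
    using x2[OF j(1)] l(2)[OF j(1)] by (simp add: power_mult_distrib ac_simps)
  then have x2': "x 2 * F 4 = c * l ^ r * y 2 * G 4"
    using j(2) by simp
  define u where "u = F 4 / (c * l ^ r * G 4)"
  have "u \<noteq> 0" "y 2 = u * x 2" "y 4 = l ^ r * u * x 4"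
    using assms(1,4,5) l(1) x2' x4 by (auto simp: u_def field_simps)
  then show ?thesis
    unfolding hr_equiv_def using l by (intro exI[of _ l] exI[of _ u]) auto
qed

lemma eval_fibre_scaling:
  assumes "in_S_deg r a b p" "w \<noteq> 0"
  shows "eval p (ones(1 := s, 2 := w)) = w ^ b * eval p (ones(1 := s, 4 := 1 / w))"
  using eval_torus_action[OF assms(1), of "ones(1 := s, 2 := w)" 1 "ones(1 := s, 4 := 1 / w)" w]
    assms(2) by simp

lemma eval_section_scaling:
  assumes "in_S_deg 0 a b p" "w \<noteq> 0"
  shows "eval p (ones(4 := t, 3 := w)) = w ^ a * eval p (ones(4 := t, 1 := 1 / w))"
  using eval_torus_action[OF assms(1), of "ones(4 := t, 3 := w)" w "ones(4 := t, 1 := 1 / w)" 1]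
    assms(2) by simp

locale ample_section =
  fixes r a b :: nat and f :: mpoly
  assumes ample: "r * b < a" "0 < b"
    and f_deg: "in_S_deg r a b f"
begin

lemma r_le_a: "r \<le> a" and a_pos: "0 < a"
proof -
  have "r \<le> r * b"
    using ample(2) by simp
  then show "r \<le> a" "0 < a"
    using ample(1) by linarith+
qed

lemma in_S_deg_pderiv_1: "in_S_deg r (a - 1) b (Defs.pderiv 1 f)"
  and in_S_deg_pderiv_3: "in_S_deg r (a - 1) b (Defs.pderiv 3 f)"
  and in_S_deg_pderiv_4: "in_S_deg r (a - r) (b - 1) (Defs.pderiv 4 f)"
  using in_S_deg_pderiv[OF f_deg, of 1 1 0] in_S_deg_pderiv[OF f_deg, of 3 1 0]
    in_S_deg_pderiv[OF f_deg, of 4 r 1]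
  by (simp_all add: mon_deg_def lookup_single)

lemma logder_in_J1_deg: "i \<in> {1,2,3,4} \<Longrightarrow> logder i f \<in> J1_deg r a b f"
  unfolding logder_def
  using ample a_pos r_le_a
  by (auto intro!: mult_pderiv_in_J1_deg[OF f_deg] in_S_deg_var simp: mon_deg_def lookup_single)

lemma var_mult_pderiv_in_J1_deg:
  "i \<in> {1,3} \<Longrightarrow> j \<in> {1,3} \<Longrightarrow> var j * Defs.pderiv i f \<in> J1_deg r a b f"
  using a_pos by (auto intro!: mult_pderiv_in_J1_deg[OF f_deg] in_S_deg_var simp: mon_deg_def lookup_single)

lemma var_2_mult_power_pderiv_4_in_J1_deg:
  assumes "j \<in> {1,3}"
  shows "var 2 * var j ^ r * Defs.pderiv 4 f \<in> J1_deg r a b f"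
proof (rule mult_pderiv_in_J1_deg[OF f_deg])
  show "in_S_deg r (0 + r * 1) (1 + r * 0) (var 2 * var j ^ r)"
    using assms by (intro in_S_deg_mult in_S_deg_power in_S_deg_var) (auto simp: mon_deg_def lookup_single)
qed (use ample r_le_a in \<open>simp_all add: mon_deg_def lookup_single\<close>)

lemma hr_equiv_pderiv_eq_0_iff:
  assumes "hr_equiv r x y" "i \<in> {1,3,4}"
  shows "eval (Defs.pderiv i f) y = 0 \<longleftrightarrow> eval (Defs.pderiv i f) x = 0"
  using assms hr_equiv_eval_eq_0_iff in_S_deg_pderiv_1 in_S_deg_pderiv_3 in_S_deg_pderiv_4
  by blast

definition separating :: "(nat \<Rightarrow> complex) \<Rightarrow> bool" where
  "separating x \<longleftrightarrow> eval (Defs.pderiv 4 f) x \<noteq> 0 \<and>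
     (eval (Defs.pderiv 1 f) x \<noteq> 0 \<or> eval (Defs.pderiv 3 f) x \<noteq> 0)"

lemma hr_equiv_separating_iff: "hr_equiv r x y \<Longrightarrow> separating y \<longleftrightarrow> separating x"
  by (simp add: separating_def hr_equiv_pderiv_eq_0_iff)

lemma hr_equiv_if_J1_deg_proportional:
  assumes "in_U x" "in_U y" "separating x" "separating y"
    and "c \<noteq> 0" "\<And>g. g \<in> J1_deg r a b f \<Longrightarrow> eval g x = c * eval g y"
  shows "hr_equiv r x y"
proof (rule hr_equiv_of_proportional_values)
  let ?F = "\<lambda>i. eval (Defs.pderiv i f) x" and ?G = "\<lambda>i. eval (Defs.pderiv i f) y"
  show "x j * ?F i = c * (y j * ?G i)" if "i \<in> {1,3}" "j \<in> {1,3}" for i j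
    using assms(6)[OF var_mult_pderiv_in_J1_deg[OF that]] by (simp add: eval_mult eval_var)
  show "x 4 * ?F 4 = c * (y 4 * ?G 4)"
    using assms(6)[OF logder_in_J1_deg[of 4]] by (simp add: eval_logder)
  show "x 2 * x j ^ r * ?F 4 = c * (y 2 * y j ^ r * ?G 4)" if "j \<in> {1,3}" for j
    using assms(6)[OF var_2_mult_power_pderiv_4_in_J1_deg[OF that]]
    by (simp add: eval_mult eval_var eval_power)
qed (use assms in \<open>auto simp: in_U_def separating_def\<close>)

end

locale nondegenerate_section = ample_section +
  assumes nondeg: "nondegenerate f"
begin

lemma logder_nonzero: "in_U x \<Longrightarrow> \<exists>i\<in>{1,2,3,4}. eval (logder i f) x \<noteq> 0"
  using nondeg by (auto simp: nondegenerate_def)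

lemma logder_1_3_nonzero_if_logder_4_eq_0:
  assumes "in_U x" "eval f x = 0" "eval (logder 4 f) x = 0"
  shows "eval (logder 1 f) x \<noteq> 0 \<and> eval (logder 3 f) x \<noteq> 0"
proof -
  have "eval (logder 2 f) x = 0" "eval (logder 1 f) x + eval (logder 3 f) x = 0"
    using euler_D1[OF f_deg, of x] euler_D2[OF f_deg, of x] assms(2,3) by simp_all
  then show ?thesis
    using logder_nonzero[OF assms(1)] assms(3) by auto
qed

lemma logder_4_eq_0_if_logder_2_eq_0:
  "eval f x = 0 \<Longrightarrow> eval (logder 2 f) x = 0 \<Longrightarrow> eval (logder 4 f) x = 0"
  using euler_D2[OF f_deg, of x] by simp

lemma pderiv_1_or_3_nonzero:
  assumes "0 < r" "in_U x" "eval f x = 0"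
  shows "eval (Defs.pderiv 1 f) x \<noteq> 0 \<or> eval (Defs.pderiv 3 f) x \<noteq> 0"
proof (rule ccontr)
  assume "\<not> ?thesis"
  then have "eval (logder 1 f) x = 0" "eval (logder 3 f) x = 0"
    by (simp_all add: eval_logder)
  moreover from this have "eval (logder 4 f) x = 0"
    using euler_D1[OF f_deg, of x] assms(1,3) by simp
  ultimately show False
    using logder_1_3_nonzero_if_logder_4_eq_0[OF assms(2,3)] by simp
qed

(* Otherwise df/dx_1 either vanishes somewhere on the fibre or is constant on it; in the second
   case scaling x_2 to 0 gives a point of Z on x_2 = 0 where df/dx_1 vanishes. Both points are
   singular. *)
lemma f_nonzero_on_fibre: "\<exists>t. eval f (ones(1 := s, 4 := t)) \<noteq> 0"
proof (rule ccontr)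
  assume "\<not> ?thesis"
  then have f0: "\<And>t. eval f (ones(1 := s, 4 := t)) = 0"
    by simp
  then have d4: "\<And>t. eval (Defs.pderiv 4 f) (ones(1 := s, 4 := t)) = 0"
    by (rule pderiv_eval_zero_on_zero_line)
  have "eval (Defs.pderiv 1 f) (ones(1 := s, 4 := t)) \<noteq> 0" for t
  proof
    assume "eval (Defs.pderiv 1 f) (ones(1 := s, 4 := t)) = 0"
    then show False
      using logder_1_3_nonzero_if_logder_4_eq_0[of "ones(1 := s, 4 := t)"] f0 d4
      by (simp add: eval_logder in_U_def)
  qed
  then obtain d where d: "\<And>t. eval (Defs.pderiv 1 f) (ones(1 := s, 4 := t)) = d"
    using eval_on_line_zero_or_constant[of "Defs.pderiv 1 f" "ones(1 := s)" 4] by blast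
  have "eval f (ones(1 := s, 2 := 0)) = 0"
    by (rule eval_upd_0_eq_0[of b _ _ _ 0]) (use ample(2) eval_fibre_scaling[OF f_deg] f0 in simp_all)
  moreover have "eval (Defs.pderiv 1 f) (ones(1 := s, 2 := 0)) = 0"
    by (rule eval_upd_0_eq_0[of b _ _ _ d])
      (use ample(2) eval_fibre_scaling[OF in_S_deg_pderiv_1] d in simp_all)
  ultimately show False
    using logder_1_3_nonzero_if_logder_4_eq_0[of "ones(1 := s, 2 := 0)"]
      logder_4_eq_0_if_logder_2_eq_0[of "ones(1 := s, 2 := 0)"]
    by (simp add: eval_logder in_U_def)
qed

lemma f_nonzero_on_section:
  assumes "r = 0"
  shows "\<exists>s. eval f (ones(4 := t, 1 := s)) \<noteq> 0"
proof (rule ccontr)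
  assume "\<not> ?thesis"
  then have f0: "\<And>s. eval f (ones(4 := t, 1 := s)) = 0"
    by simp
  then have d1: "\<And>s. eval (Defs.pderiv 1 f) (ones(4 := t, 1 := s)) = 0"
    by (rule pderiv_eval_zero_on_zero_line)
  have "eval (Defs.pderiv 4 f) (ones(4 := t, 1 := s)) \<noteq> 0" for s
  proof
    assume "eval (Defs.pderiv 4 f) (ones(4 := t, 1 := s)) = 0"
    then show False
      using logder_1_3_nonzero_if_logder_4_eq_0[of "ones(4 := t, 1 := s)"] f0 d1
      by (simp add: eval_logder in_U_def)
  qed
  then obtain d where d: "\<And>s. eval (Defs.pderiv 4 f) (ones(4 := t, 1 := s)) = d"
    using eval_on_line_zero_or_constant[of "Defs.pderiv 4 f" "ones(4 := t)" 1] by blast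
  have f_deg0: "in_S_deg 0 a b f" and d4_deg0: "in_S_deg 0 a (b - 1) (Defs.pderiv 4 f)"
    using f_deg in_S_deg_pderiv_4 assms by simp_all
  have "eval f (ones(4 := t, 3 := 0)) = 0"
    by (rule eval_upd_0_eq_0[of a _ _ _ 0]) (use a_pos eval_section_scaling[OF f_deg0] f0 in simp_all)
  moreover have "eval (Defs.pderiv 4 f) (ones(4 := t, 3 := 0)) = 0"
    by (rule eval_upd_0_eq_0[of a _ _ _ d]) (use a_pos eval_section_scaling[OF d4_deg0] d in simp_all)
  ultimately show False
    using logder_1_3_nonzero_if_logder_4_eq_0[of "ones(4 := t, 3 := 0)"]
    by (simp add: eval_logder in_U_def)
qed

lemma J1_deg_base_point_free: "in_Z f x \<Longrightarrow> \<exists>g\<in>J1_deg r a b f. eval g x \<noteq> 0"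
  using logder_nonzero logder_in_J1_deg by (auto simp: in_Z_def)

lemma finite_critical_points_x4:
  "finite {(s, t). eval f (ones(1 := s, 4 := t)) = 0 \<and> eval (Defs.pderiv 4 f) (ones(1 := s, 4 := t)) = 0}"
proof (rule finite_plane_critical_points)
  show "eval (Defs.pderiv 1 f) (ones(1 := s, 4 := t)) \<noteq> 0"
    if "eval f (ones(1 := s, 4 := t)) = 0" "eval (Defs.pderiv 4 f) (ones(1 := s, 4 := t)) = 0" for s t
    using that logder_1_3_nonzero_if_logder_4_eq_0[of "ones(1 := s, 4 := t)"]
    by (auto simp: eval_logder in_U_def)
qed (use f_nonzero_on_fibre in auto)

lemma finite_critical_points_x1:
  assumes "r = 0"
  shows "finite {(s, t). eval f (ones(1 := s, 4 := t)) = 0 \<and> eval (Defs.pderiv 1 f) (ones(1 := s, 4 := t)) = 0}"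
proof -
  have "finite {(t, s). eval f (ones(4 := t, 1 := s)) = 0 \<and> eval (Defs.pderiv 1 f) (ones(4 := t, 1 := s)) = 0}"
  proof (rule finite_plane_critical_points)
    show "eval (Defs.pderiv 4 f) (ones(4 := t, 1 := s)) \<noteq> 0"
      if "eval f (ones(4 := t, 1 := s)) = 0" "eval (Defs.pderiv 1 f) (ones(4 := t, 1 := s)) = 0" for s t
      using that logder_1_3_nonzero_if_logder_4_eq_0[of "ones(4 := t, 1 := s)"]
      by (auto simp: eval_logder in_U_def)
  qed (use f_nonzero_on_section[OF assms] in auto)
  moreover have "ones(4 := t, 1 := s) = ones(1 := s, 4 := t)" for s t :: complex
    by (rule fun_upd_twist) simp
  ultimately have "finite (prod.swap ` {(t, s). eval f (ones(1 := s, 4 := t)) = 0 \<and>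
      eval (Defs.pderiv 1 f) (ones(1 := s, 4 := t)) = 0})"
    by simp
  then show ?thesis
    by (rule back_subst[of finite]) auto
qed

lemma f_nonzero_at_x1_x2_zero: "eval f (ones(2 := 0, 1 := 0)) \<noteq> 0"
  using logder_1_3_nonzero_if_logder_4_eq_0[of "ones(2 := 0, 1 := 0)"]
    logder_4_eq_0_if_logder_2_eq_0[of "ones(2 := 0, 1 := 0)"]
  by (auto simp: eval_logder in_U_def)

lemma f_nonzero_at_x3_x4_zero: "eval f (ones(3 := 0, 4 := 0)) \<noteq> 0"
  using logder_1_3_nonzero_if_logder_4_eq_0[of "ones(3 := 0, 4 := 0)"]
  by (auto simp: eval_logder in_U_def)

lemma nonseparating_cases:
  assumes "in_U x" "eval f x = 0" "\<not> separating x"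
  shows "eval (Defs.pderiv 4 f) x = 0 \<or> r = 0 \<and> eval (Defs.pderiv 1 f) x = 0"
  using assms pderiv_1_or_3_nonzero[OF _ assms(1,2)] by (auto simp: separating_def)

lemma finite_nonseparating_main_chart:
  "finite {(s, t). eval f (ones(1 := s, 4 := t)) = 0 \<and> \<not> separating (ones(1 := s, 4 := t))}"
proof (rule finite_subset)
  show "{(s, t). eval f (ones(1 := s, 4 := t)) = 0 \<and> \<not> separating (ones(1 := s, 4 := t))} \<subseteq>
    {(s, t). eval f (ones(1 := s, 4 := t)) = 0 \<and> eval (Defs.pderiv 4 f) (ones(1 := s, 4 := t)) = 0} \<union>
    {(s, t). eval f (ones(1 := s, 4 := t)) = 0 \<and> eval (Defs.pderiv 1 f) (ones(1 := s, 4 := t)) = 0 \<and> r = 0}"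
  proof (safe)
    fix s t
    assume "eval f (ones(1 := s, 4 := t)) = 0" "\<not> separating (ones(1 := s, 4 := t))"
    then show "eval (Defs.pderiv 1 f) (ones(1 := s, 4 := t)) = 0" "r = 0"
      if "eval (Defs.pderiv 4 f) (ones(1 := s, 4 := t)) \<noteq> 0"
      using that nonseparating_cases[of "ones(1 := s, 4 := t)"] by (auto simp: in_U_def)
  qed
  have "finite {(s, t). eval f (ones(1 := s, 4 := t)) = 0 \<and>
      eval (Defs.pderiv 1 f) (ones(1 := s, 4 := t)) = 0 \<and> r = 0}"
    using finite_critical_points_x1 by (cases "r = 0") simp_all
  then show "finite ({(s, t). eval f (ones(1 := s, 4 := t)) = 0 \<and> eval (Defs.pderiv 4 f) (ones(1 := s, 4 := t)) = 0} \<union>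
    {(s, t). eval f (ones(1 := s, 4 := t)) = 0 \<and> eval (Defs.pderiv 1 f) (ones(1 := s, 4 := t)) = 0 \<and> r = 0})"
    using finite_critical_points_x4 by simp
qed

definition exceptional_points :: "(nat \<Rightarrow> complex) set" where
  "exceptional_points = {p \<in> normal_forms. in_Z f p \<and> \<not> separating p}"

lemma exceptional_points_cover:
  assumes "in_Z f x" "\<not> separating x"
  shows "\<exists>p\<in>exceptional_points. hr_equiv r p x"
proof -
  from assms(1) obtain p where p: "p \<in> normal_forms" "hr_equiv r p x"
    using hr_equiv_normal_form by (auto simp: in_Z_def)
  then have "p \<in> exceptional_points"
    using assms normal_forms_in_U hr_equiv_eval_eq_0_iff[OF _ f_deg] hr_equiv_separating_iff
    by (auto simp: exceptional_points_def in_Z_def)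
  with p show ?thesis
    by blast
qed

lemma finite_exceptional_points: "finite exceptional_points"
proof (rule finite_subset)
  let ?A = "{(s, t). eval f (ones(1 := s, 4 := t)) = 0 \<and> \<not> separating (ones(1 := s, 4 := t))}"
    and ?B = "{s. eval f (ones(2 := 0, 1 := s)) = 0}"
    and ?C = "{t. eval f (ones(3 := 0, 4 := t)) = 0}"
  show "exceptional_points \<subseteq> (\<lambda>(s, t). ones(1 := s, 4 := t)) ` ?A \<union> (\<lambda>s. ones(2 := 0, 1 := s)) ` ?B \<union>
      (\<lambda>t. ones(3 := 0, 4 := t)) ` ?C \<union> {ones(2 := 0, 3 := 0)}"
    by (force simp: exceptional_points_def normal_forms_def in_Z_def)
  have "finite ?B"
    by (rule finite_zeros_on_line[OF f_nonzero_at_x1_x2_zero])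
  moreover have "finite ?C"
    by (rule finite_zeros_on_line[OF f_nonzero_at_x3_x4_zero])
  ultimately show "finite ((\<lambda>(s, t). ones(1 := s, 4 := t)) ` ?A \<union> (\<lambda>s. ones(2 := 0, 1 := s)) ` ?B \<union>
      (\<lambda>t. ones(3 := 0, 4 := t)) ` ?C \<union> {ones(2 := 0, 3 := 0)})"
    using finite_nonseparating_main_chart by simp
qed

end

theorem mainTheorem6:
  fixes r a b :: nat and f :: mpoly
  assumes "a > r * b" and "b > 0"
    and "in_S_deg r a b f"
    and "nondegenerate f"
  shows "(\<forall>x. in_Z f x \<longrightarrow> (\<exists>g \<in> J1_deg r a b f. eval g x \<noteq> 0))
    \<and> (\<exists>P. finite P \<and> (\<forall>p \<in> P. in_Z f p) \<and>
         (\<forall>x y. in_Z f x \<and> in_Z f y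
            \<and> \<not> (\<exists>p \<in> P. hr_equiv r p x) \<and> \<not> (\<exists>p \<in> P. hr_equiv r p y)
            \<and> (\<exists>c. c \<noteq> 0 \<and> (\<forall>g \<in> J1_deg r a b f. eval g x = c * eval g y))
            \<longrightarrow> hr_equiv r x y))"
proof -
  interpret nondegenerate_section r a b f
    using assms by unfold_locales auto
  let ?P = exceptional_points
  have "hr_equiv r x y"
    if "in_Z f x" "in_Z f y" "\<not> (\<exists>p\<in>?P. hr_equiv r p x)" "\<not> (\<exists>p\<in>?P. hr_equiv r p y)"
      and "c \<noteq> 0" "\<forall>g\<in>J1_deg r a b f. eval g x = c * eval g y" for x y c
    using that exceptional_points_cover[of x] exceptional_points_cover[of y]
    by (intro hr_equiv_if_J1_deg_proportional[of x y c]) (auto simp: in_Z_def)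
  moreover have "\<forall>p\<in>?P. in_Z f p"
    by (simp add: exceptional_points_def)
  ultimately show ?thesis
    using J1_deg_base_point_free finite_exceptional_points by (intro conjI exI[of _ ?P]) auto
qed

end
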